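(* Let $(D, \{ \prec_\alpha, \succ_\alpha \}_{\alpha \in \Omega})$ be a dendriform family algebra and $\{ T_\alpha : M \to A \}_{\alpha \in \Omega}$ an $\mathcal{O}$-operator family. Then there is a bijection $$\mathrm{Hom}_{\mathbf{Ooperf}} \big( \{ \mathrm{Id}_\alpha : D \to (D \otimes \mathbf{k}\Omega)_{\mathrm{Tot}}\},\ \{ T_\alpha : M \to A\} \big) \cong \mathrm{Hom}_{\mathbf{Dendf}} (D, M_{ \{ T_\alpha \} }),$$ natural in both arguments; that is, the functor $\mathcal{G}:\mathbf{Dendf}\to\mathbf{Ooperf}$, $D\mapsto\{\mathrm{Id}_\alpha: D\to(D\otimes\mathbf{k}\Omega)_{\mathrm{Tot}}\}$, is left adjoint to the functor $\mathcal{F}:\mathbf{Ooperf}\to\mathbf{Dendf}$, $\{T_\alpha:M\to A\}\mapsto M_{\{T_\alpha\}}$.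
   Context: $\Omega$ is a semigroup. An $\mathcal{O}$-operator family is a collection of linear maps $T_\alpha:M\to A$ ($A$ associative algebra, $M$ an $A$-bimodule) with $T_\alpha(u) \cdot T_\beta(v) = T_{\alpha\beta}(T_\alpha(u) \cdot v + u \cdot T_\beta(v))$. $\mathbf{Ooperf}$ is the category of $\mathcal{O}$-operator families, where a morphism from $\{T_\alpha:M\to A\}$ to $\{T'_\alpha:M'\to A'\}$ is a pair $(\phi,\psi)$, $\phi:A\to A'$ an algebra homomorphism, $\psi:M\to M'$ linear, with $\psi(a\cdot u)=\phi(a)\cdot'\psi(u)$, $\psi(u\cdot a)=\psi(u)\cdot'\phi(a)$, $\phi\circ T_\alpha=T'_\alpha\circ\psi$. A dendriform family algebra is a vector space $D$ with bilinear maps $\{\prec_\alpha,\succ_\alpha\}_{\alpha\in\Omega}$ such that $(x \prec_\alpha y) \prec_\beta z = x \prec_{\alpha \beta} (y \prec_\beta z + y \succ_\alpha z)$, $(x \succ_\alpha y) \prec_\beta z = x \succ_\alpha (y \prec_\beta z)$, $(x \prec_\beta y + x \succ_\alpha y) \succ_{\alpha \beta} z = x \succ_\alpha (y \succ_\beta z)$; $\mathbf{Dendf}$ is their category with morphisms the linear maps preserving all $\prec_\alpha,\succ_\alpha$. $M_{\{T_\alpha\}}$ denotes $M$ with $u \prec_\alpha v=u \cdot T_\alpha(v)$, $u \succ_\alpha v = T_\alpha(u) \cdot v$ (a dendriform family algebra). $(D\otimes\mathbf{k}\Omega)_{\mathrm{Tot}}$ is the associative algebra $D\otimes\mathbf{k}\Omega$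 with $(x \otimes \alpha) \odot (y \otimes \beta)= (x \prec_{\beta} y + x \succ_{\alpha} y) \otimes \alpha \beta$; $D$ is a $(D\otimes\mathbf{k}\Omega)_{\mathrm{Tot}}$-bimodule via $(x \otimes \alpha) \cdot y= x \succ_{\alpha} y$, $y \cdot (x \otimes \alpha)= y \prec_{\alpha} x$; and $\mathrm{Id}_\alpha:D\to(D\otimes\mathbf{k}\Omega)_{\mathrm{Tot}}$, $\mathrm{Id}_\alpha(x)=x\otimes\alpha$, form an $\mathcal{O}$-operator family. *)

theory Defs
  imports Complex_Main "HOL-Library.Poly_Mapping"
begin

text \<open>Vector spaces over 'k are
  types of class ab_group_add equipped with a scalar multiplication s such that
  vector_space s holds.  The semigroup Omega is a type 'w of class semigroup_mult.\<close>

definition bilin :: "('k::field \<Rightarrow> 'u::ab_group_add \<Rightarrow> 'u) \<Rightarrow> ('k \<Rightarrow> 'v::ab_group_add \<Rightarrow> 'v)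
    \<Rightarrow> ('k \<Rightarrow> 'x::ab_group_add \<Rightarrow> 'x) \<Rightarrow> ('u \<Rightarrow> 'v \<Rightarrow> 'x) \<Rightarrow> bool" where
  "bilin s1 s2 s3 f \<longleftrightarrow> (\<forall>x. Vector_Spaces.linear s2 s3 (f x)) \<and> (\<forall>y. Vector_Spaces.linear s1 s3 (\<lambda>x. f x y))"

record ('k, 'w, 'd) dend =
  dscale :: "'k \<Rightarrow> 'd \<Rightarrow> 'd"
  dprec :: "'w \<Rightarrow> 'd \<Rightarrow> 'd \<Rightarrow> 'd"
  dsucc :: "'w \<Rightarrow> 'd \<Rightarrow> 'd \<Rightarrow> 'd"

definition dendf :: "('k::field, 'w::semigroup_mult, 'd::ab_group_add) dend \<Rightarrow> bool" where
  "dendf D \<longleftrightarrow> vector_space (dscale D)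
    \<and> (\<forall>\<alpha>. bilin (dscale D) (dscale D) (dscale D) (dprec D \<alpha>))
    \<and> (\<forall>\<alpha>. bilin (dscale D) (dscale D) (dscale D) (dsucc D \<alpha>))
    \<and> (\<forall>\<alpha> \<beta> x y z. dprec D \<beta> (dprec D \<alpha> x y) z
          = dprec D (\<alpha> * \<beta>) x (dprec D \<beta> y z + dsucc D \<alpha> y z))
    \<and> (\<forall>\<alpha> \<beta> x y z. dprec D \<beta> (dsucc D \<alpha> x y) z = dsucc D \<alpha> x (dprec D \<beta> y z))
    \<and> (\<forall>\<alpha> \<beta> x y z. dsucc D (\<alpha> * \<beta>) (dprec D \<beta> x y + dsucc D \<alpha> x y) z
          = dsucc D \<alpha> x (dsucc D \<beta> y z))"

definition dend_hom :: "('k::field, 'w, 'd::ab_group_add) dend \<Rightarrow> ('k, 'w, 'e::ab_group_add) dend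
    \<Rightarrow> ('d \<Rightarrow> 'e) set" where
  "dend_hom D E = {f. Vector_Spaces.linear (dscale D) (dscale E) f
     \<and> (\<forall>\<alpha> x y. f (dprec D \<alpha> x y) = dprec E \<alpha> (f x) (f y))
     \<and> (\<forall>\<alpha> x y. f (dsucc D \<alpha> x y) = dsucc E \<alpha> (f x) (f y))}"

record ('k, 'w, 'a, 'm) oopf =
  ascale :: "'k \<Rightarrow> 'a \<Rightarrow> 'a"
  amult :: "'a \<Rightarrow> 'a \<Rightarrow> 'a"
  mscale :: "'k \<Rightarrow> 'm \<Rightarrow> 'm"
  lact :: "'a \<Rightarrow> 'm \<Rightarrow> 'm"
  ract :: "'m \<Rightarrow> 'a \<Rightarrow> 'm"
  oper :: "'w \<Rightarrow> 'm \<Rightarrow> 'a"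

definition assoc_alg :: "('k::field \<Rightarrow> 'a::ab_group_add \<Rightarrow> 'a) \<Rightarrow> ('a \<Rightarrow> 'a \<Rightarrow> 'a) \<Rightarrow> bool" where
  "assoc_alg s m \<longleftrightarrow> vector_space s \<and> bilin s s s m \<and> (\<forall>a b c. m (m a b) c = m a (m b c))"

definition bimodule :: "('k::field \<Rightarrow> 'a::ab_group_add \<Rightarrow> 'a) \<Rightarrow> ('a \<Rightarrow> 'a \<Rightarrow> 'a)
    \<Rightarrow> ('k \<Rightarrow> 'm::ab_group_add \<Rightarrow> 'm) \<Rightarrow> ('a \<Rightarrow> 'm \<Rightarrow> 'm) \<Rightarrow> ('m \<Rightarrow> 'a \<Rightarrow> 'm) \<Rightarrow> bool" where
  "bimodule sA m sM l r \<longleftrightarrow> assoc_alg sA m \<and> vector_space sM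
     \<and> bilin sA sM sM l \<and> bilin sM sA sM r
     \<and> (\<forall>a b u. l (m a b) u = l a (l b u))
     \<and> (\<forall>a b u. r (r u a) b = r u (m a b))
     \<and> (\<forall>a b u. r (l a u) b = l a (r u b))"

definition ooperf :: "('k::field, 'w::semigroup_mult, 'a::ab_group_add, 'm::ab_group_add) oopf \<Rightarrow> bool" where
  "ooperf T \<longleftrightarrow> bimodule (ascale T) (amult T) (mscale T) (lact T) (ract T)
     \<and> (\<forall>\<alpha>. Vector_Spaces.linear (mscale T) (ascale T) (oper T \<alpha>))
     \<and> (\<forall>\<alpha> \<beta> u v. amult T (oper T \<alpha> u) (oper T \<beta> v)
          = oper T (\<alpha> * \<beta>) (lact T (oper T \<alpha> u) v + ract T u (oper T \<beta> v)))"

definition oopf_hom :: "('k::field, 'w, 'a::ab_group_add, 'm::ab_group_add) oopf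
    \<Rightarrow> ('k, 'w, 'b::ab_group_add, 'n::ab_group_add) oopf \<Rightarrow> (('a \<Rightarrow> 'b) \<times> ('m \<Rightarrow> 'n)) set" where
  "oopf_hom T T' = {(\<phi>, \<psi>).
      Vector_Spaces.linear (ascale T) (ascale T') \<phi>
    \<and> (\<forall>a b. \<phi> (amult T a b) = amult T' (\<phi> a) (\<phi> b))
    \<and> Vector_Spaces.linear (mscale T) (mscale T') \<psi>
    \<and> (\<forall>a u. \<psi> (lact T a u) = lact T' (\<phi> a) (\<psi> u))
    \<and> (\<forall>a u. \<psi> (ract T u a) = ract T' (\<psi> u) (\<phi> a))
    \<and> (\<forall>\<alpha>. \<phi> \<circ> oper T \<alpha> = oper T' \<alpha> \<circ> \<psi>)}"

definition oopf_comp :: "('b \<Rightarrow> 'c) \<times> ('n \<Rightarrow> 'p) \<Rightarrow> ('a \<Rightarrow> 'b) \<times> ('m \<Rightarrow> 'n) \<Rightarrow> ('a \<Rightarrow> 'c) \<times> ('m \<Rightarrow> 'p)" where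
  "oopf_comp g f = (fst g \<circ> fst f, snd g \<circ> snd f)"

definition F_obj :: "('k, 'w, 'a, 'm) oopf \<Rightarrow> ('k, 'w, 'm) dend" where
  "F_obj T = \<lparr> dscale = mscale T,
              dprec = (\<lambda>\<alpha> u v. ract T u (oper T \<alpha> v)),
              dsucc = (\<lambda>\<alpha> u v. lact T (oper T \<alpha> u) v) \<rparr>"

definition F_mor :: "('a \<Rightarrow> 'b) \<times> ('m \<Rightarrow> 'n) \<Rightarrow> ('m \<Rightarrow> 'n)" where
  "F_mor p = snd p"

text \<open>D \<otimes> k\<Omega> is represented as finitely supported functions \<Omega> \<rightarrow> D,
  x \<otimes> \<alpha> being Poly_Mapping.single \<alpha> x.\<close>

definition tot_scale :: "('k \<Rightarrow> 'd::zero \<Rightarrow> 'd) \<Rightarrow> 'k \<Rightarrow> ('w \<Rightarrow>\<^sub>0 'd) \<Rightarrow> ('w \<Rightarrow>\<^sub>0 'd)" where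
  "tot_scale s c f = Poly_Mapping.map (s c) f"

definition tot_mult :: "('k, 'w::semigroup_mult, 'd::ab_group_add) dend
    \<Rightarrow> ('w \<Rightarrow>\<^sub>0 'd) \<Rightarrow> ('w \<Rightarrow>\<^sub>0 'd) \<Rightarrow> ('w \<Rightarrow>\<^sub>0 'd)" where
  "tot_mult D f g = (\<Sum>\<alpha>\<in>Poly_Mapping.keys f. \<Sum>\<beta>\<in>Poly_Mapping.keys g.
      Poly_Mapping.single (\<alpha> * \<beta>)
        (dprec D \<beta> (Poly_Mapping.lookup f \<alpha>) (Poly_Mapping.lookup g \<beta>) + dsucc D \<alpha> (Poly_Mapping.lookup f \<alpha>) (Poly_Mapping.lookup g \<beta>)))"

definition tot_lact :: "('k, 'w, 'd::ab_group_add) dend \<Rightarrow> ('w \<Rightarrow>\<^sub>0 'd) \<Rightarrow> 'd \<Rightarrow> 'd" where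
  "tot_lact D f y = (\<Sum>\<alpha>\<in>Poly_Mapping.keys f. dsucc D \<alpha> (Poly_Mapping.lookup f \<alpha>) y)"

definition tot_ract :: "('k, 'w, 'd::ab_group_add) dend \<Rightarrow> 'd \<Rightarrow> ('w \<Rightarrow>\<^sub>0 'd) \<Rightarrow> 'd" where
  "tot_ract D y f = (\<Sum>\<alpha>\<in>Poly_Mapping.keys f. dprec D \<alpha> y (Poly_Mapping.lookup f \<alpha>))"

definition G_obj :: "('k, 'w::semigroup_mult, 'd::ab_group_add) dend \<Rightarrow> ('k, 'w, 'w \<Rightarrow>\<^sub>0 'd, 'd) oopf" where
  "G_obj D = \<lparr> ascale = tot_scale (dscale D),
              amult = tot_mult D,
              mscale = dscale D,
              lact = tot_lact D,
              ract = tot_ract D,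
              oper = (\<lambda>\<alpha> x. Poly_Mapping.single \<alpha> x) \<rparr>"

definition G_mor :: "('d::zero \<Rightarrow> 'e::zero) \<Rightarrow> (('w \<Rightarrow>\<^sub>0 'd) \<Rightarrow> ('w \<Rightarrow>\<^sub>0 'e)) \<times> ('d \<Rightarrow> 'e)" where
  "G_mor g = (Poly_Mapping.map g, g)"

end

theory Submission
  imports Defs
begin

text \<open>Every element of \<open>D \<otimes> k\<Omega>\<close> is a sum of generators \<open>x \<otimes> \<alpha> = Id\<^sub>\<alpha> x\<close>, so in a
  morphism \<open>(\<phi>, \<psi>)\<close> out of \<open>{Id\<^sub>\<alpha>}\<close> the algebra map is forced by the module map:
  \<open>\<phi> (x \<otimes> \<alpha>) = T\<^sub>\<alpha> (\<psi> x)\<close>. Conversely, if \<open>\<psi> : D \<rightarrow> M\<close> preserves the dendriform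
  operations induced by \<open>T\<close>, this formula defines an algebra morphism, because \<open>\<psi>\<close> maps the
  total product of two generators to the argument of \<open>T\<^sub>\<alpha>\<^sub>\<beta>\<close> in the O-operator identity.
  Since moreover \<open>F (G D) = D\<close> and \<open>F (G g) = g\<close>, the bijection is \<open>(\<phi>, \<psi>) \<mapsto> \<psi>\<close> and
  naturality is immediate.\<close>

section \<open>Additive maps on finitely supported functions\<close>

lemma
  assumes "Vector_Spaces.linear s1 s2 f"
  shows linear_hom_add: "f (x + y) = f x + f y"
    and linear_hom_scale: "f (s1 c x) = s2 c (f x)"
    and linear_hom_zero: "f 0 = 0"
  using assms[folded module_hom_eq_linear]
  by (fact module_hom.add module_hom.scale module_hom.zero)+

lemma single_add_induct [case_names single add]:
  fixes f :: "'a \<Rightarrow>\<^sub>0 'b::monoid_add"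
  assumes single: "\<And>\<alpha> x. P (Poly_Mapping.single \<alpha> x)"
    and add: "\<And>f g. P f \<Longrightarrow> P g \<Longrightarrow> P (f + g)"
  shows "P f"
proof (induction f rule: update_induct)
  case const
  show ?case using single[of undefined 0] by simp
next
  case (update f a b)
  have "Poly_Mapping.update a b f = f + Poly_Mapping.single a b"
    using update.hyps(1)
    by (intro poly_mapping_eqI) (auto simp: lookup_update lookup_add lookup_single in_keys_iff when_def)
  then show ?case using add[OF update.IH single] by simp
qed

lemma lookup_map_eq:
  "g 0 = 0 \<Longrightarrow> Poly_Mapping.lookup (Poly_Mapping.map g f) k = g (Poly_Mapping.lookup f k)"
  by transfer (auto simp: when_def)

lemma map_add_additive:
  fixes g :: "'a::monoid_add \<Rightarrow> 'b::cancel_comm_monoid_add"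
  assumes additive: "\<And>x y. g (x + y) = g x + g y"
  shows "Poly_Mapping.map g (f1 + f2) = Poly_Mapping.map g f1 + Poly_Mapping.map g f2"
proof -
  have "g 0 = 0" using additive[of 0 0] by simp
  then show ?thesis by (intro poly_mapping_eqI) (simp add: lookup_map_eq lookup_add additive)
qed

definition pm_extend :: "('w \<Rightarrow> 'd::zero \<Rightarrow> 'b::comm_monoid_add) \<Rightarrow> ('w \<Rightarrow>\<^sub>0 'd) \<Rightarrow> 'b" where
  "pm_extend F f = (\<Sum>\<alpha>\<in>Poly_Mapping.keys f. F \<alpha> (Poly_Mapping.lookup f \<alpha>))"

lemma pm_extend_single: "F \<alpha> 0 = 0 \<Longrightarrow> pm_extend F (Poly_Mapping.single \<alpha> x) = F \<alpha> x"
  unfolding pm_extend_def by auto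

lemma pm_extend_add:
  fixes F :: "'w \<Rightarrow> 'd::comm_monoid_add \<Rightarrow> 'b::cancel_comm_monoid_add"
  assumes additive: "\<And>\<alpha> x y. F \<alpha> (x + y) = F \<alpha> x + F \<alpha> y"
  shows "pm_extend F (f + g) = pm_extend F f + pm_extend F g"
proof -
  have "F \<alpha> 0 = 0" for \<alpha> using additive[of \<alpha> 0 0] by simp
  then show ?thesis
    unfolding pm_extend_def by (intro setsum_keys_plus_distrib) (auto simp: additive)
qed

lemma pm_extend_fun_add: "pm_extend (\<lambda>\<alpha> x. F \<alpha> x + G \<alpha> x) f = pm_extend F f + pm_extend G f"
  unfolding pm_extend_def by (simp add: sum.distrib)

lemma vector_space_imp_module: "vector_space s \<Longrightarrow> module s"
  unfolding vector_space_def module_def .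

lemma vector_space_tot_scale:
  assumes "vector_space s"
  shows "vector_space (tot_scale s)"
proof -
  interpret module s using assms by (rule vector_space_imp_module)
  show ?thesis
    unfolding vector_space_def tot_scale_def
    by (auto intro!: poly_mapping_eqI simp: lookup_map_eq lookup_add scale_right_distrib scale_left_distrib)
qed

lemma tot_scale_single:
  "vector_space s \<Longrightarrow> tot_scale s c (Poly_Mapping.single \<alpha> x) = Poly_Mapping.single \<alpha> (s c x)"
  unfolding tot_scale_def by (simp add: module.scale_zero_right vector_space_imp_module)

lemma tot_scale_add: "vector_space s \<Longrightarrow> tot_scale s c (f + g) = tot_scale s c f + tot_scale s c g"
  unfolding tot_scale_def by (simp add: map_add_additive module.scale_right_distrib vector_space_imp_module)

section \<open>The total algebra of a dendriform family algebra\<close>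

locale dendriform_family =
  fixes D :: "('k::field, 'w::semigroup_mult, 'd::ab_group_add) dend"
  assumes dendf: "dendf D"
begin

abbreviation prec where "prec \<equiv> dprec D"
abbreviation succ where "succ \<equiv> dsucc D"

lemma vector_space: "vector_space (dscale D)"
  using dendf by (simp add: dendf_def)

lemma
  shows linear_prec_left: "Vector_Spaces.linear (dscale D) (dscale D) (\<lambda>x. prec \<alpha> x y)"
    and linear_prec_right: "Vector_Spaces.linear (dscale D) (dscale D) (prec \<alpha> x)"
    and linear_succ_left: "Vector_Spaces.linear (dscale D) (dscale D) (\<lambda>x. succ \<alpha> x y)"
    and linear_succ_right: "Vector_Spaces.linear (dscale D) (dscale D) (succ \<alpha> x)"
  using dendf by (simp_all add: dendf_def bilin_def)

lemmas prec_add_left = linear_hom_add[OF linear_prec_left]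
  and prec_add_right = linear_hom_add[OF linear_prec_right]
  and succ_add_left = linear_hom_add[OF linear_succ_left]
  and succ_add_right = linear_hom_add[OF linear_succ_right]
  and prec_scale_left = linear_hom_scale[OF linear_prec_left]
  and prec_scale_right = linear_hom_scale[OF linear_prec_right]
  and succ_scale_left = linear_hom_scale[OF linear_succ_left]
  and succ_scale_right = linear_hom_scale[OF linear_succ_right]
  and prec_zero_left = linear_hom_zero[OF linear_prec_left]
  and prec_zero_right = linear_hom_zero[OF linear_prec_right]
  and succ_zero_left = linear_hom_zero[OF linear_succ_left]
  and succ_zero_right = linear_hom_zero[OF linear_succ_right]

lemma
  shows prec_prec_assoc: "prec \<beta> (prec \<alpha> x y) z = prec (\<alpha> * \<beta>) x (prec \<beta> y z + succ \<alpha> y z)"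
    and succ_prec_assoc: "prec \<beta> (succ \<alpha> x y) z = succ \<alpha> x (prec \<beta> y z)"
    and succ_succ_assoc: "succ (\<alpha> * \<beta>) (prec \<beta> x y + succ \<alpha> x y) z = succ \<alpha> x (succ \<beta> y z)"
  using dendf by (simp_all add: dendf_def)

lemma tot_mult_pm_extend:
  "tot_mult D f g = pm_extend (\<lambda>\<alpha> x. pm_extend (\<lambda>\<beta> y.
     Poly_Mapping.single (\<alpha> * \<beta>) (prec \<beta> x y + succ \<alpha> x y)) g) f"
  unfolding tot_mult_def pm_extend_def ..

lemma tot_lact_pm_extend: "tot_lact D f y = pm_extend (\<lambda>\<alpha> x. succ \<alpha> x y) f"
  unfolding tot_lact_def pm_extend_def ..

lemma tot_ract_pm_extend: "tot_ract D y f = pm_extend (\<lambda>\<alpha> x. prec \<alpha> y x) f"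
  unfolding tot_ract_def pm_extend_def ..

lemma tot_mult_single:
  "tot_mult D (Poly_Mapping.single \<alpha> x) (Poly_Mapping.single \<beta> y)
     = Poly_Mapping.single (\<alpha> * \<beta>) (prec \<beta> x y + succ \<alpha> x y)"
  by (simp add: tot_mult_pm_extend pm_extend_single prec_zero_left succ_zero_left
      prec_zero_right succ_zero_right pm_extend_def)

lemma tot_lact_single: "tot_lact D (Poly_Mapping.single \<alpha> x) y = succ \<alpha> x y"
  by (simp add: tot_lact_pm_extend pm_extend_single succ_zero_left)

lemma tot_ract_single: "tot_ract D y (Poly_Mapping.single \<alpha> x) = prec \<alpha> y x"
  by (simp add: tot_ract_pm_extend pm_extend_single prec_zero_right)

lemma tot_mult_add_left: "tot_mult D (f1 + f2) g = tot_mult D f1 g + tot_mult D f2 g"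
  unfolding tot_mult_pm_extend
  by (rule pm_extend_add)
    (simp add: prec_add_left succ_add_left pm_extend_fun_add[symmetric] single_add[symmetric] algebra_simps)

lemma tot_mult_add_right: "tot_mult D f (g1 + g2) = tot_mult D f g1 + tot_mult D f g2"
  unfolding tot_mult_pm_extend
  by (simp add: pm_extend_add prec_add_right succ_add_right single_add[symmetric] algebra_simps
      pm_extend_fun_add[symmetric])

lemma tot_lact_add_left: "tot_lact D (f1 + f2) y = tot_lact D f1 y + tot_lact D f2 y"
  unfolding tot_lact_pm_extend by (rule pm_extend_add) (rule succ_add_left)

lemma tot_lact_add_right: "tot_lact D f (y1 + y2) = tot_lact D f y1 + tot_lact D f y2"
  unfolding tot_lact_pm_extend by (simp add: succ_add_right pm_extend_fun_add)

lemma tot_ract_add_left: "tot_ract D (y1 + y2) f = tot_ract D y1 f + tot_ract D y2 f"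
  using pm_extend_fun_add[of "\<lambda>\<alpha> x. prec \<alpha> y1 x" "\<lambda>\<alpha> x. prec \<alpha> y2 x"]
  by (simp add: tot_ract_pm_extend prec_add_left)

lemma tot_ract_add_right: "tot_ract D y (f1 + f2) = tot_ract D y f1 + tot_ract D y f2"
  unfolding tot_ract_pm_extend by (rule pm_extend_add) (rule prec_add_right)

lemma tot_mult_scale_left:
  "tot_mult D (tot_scale (dscale D) c f) g = tot_scale (dscale D) c (tot_mult D f g)"
proof (induction f rule: single_add_induct)
  case (single \<alpha> x)
  show ?case
    by (induction g rule: single_add_induct)
      (simp_all add: tot_scale_single tot_scale_add vector_space tot_mult_single tot_mult_add_right
        prec_scale_left succ_scale_left module.scale_right_distrib vector_space_imp_module)
next
  case (add f1 f2)
  then show ?case by (simp add: tot_scale_add vector_space tot_mult_add_left)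
qed

lemma tot_mult_scale_right:
  "tot_mult D f (tot_scale (dscale D) c g) = tot_scale (dscale D) c (tot_mult D f g)"
proof (induction f rule: single_add_induct)
  case (single \<alpha> x)
  show ?case
    by (induction g rule: single_add_induct)
      (simp_all add: tot_scale_single tot_scale_add vector_space tot_mult_single tot_mult_add_right
        prec_scale_right succ_scale_right module.scale_right_distrib vector_space_imp_module)
next
  case (add f1 f2)
  then show ?case by (simp add: tot_scale_add vector_space tot_mult_add_left)
qed

lemma tot_lact_scale_left: "tot_lact D (tot_scale (dscale D) c f) y = dscale D c (tot_lact D f y)"
  by (induction f rule: single_add_induct)
    (simp_all add: tot_scale_single tot_scale_add vector_space tot_lact_single tot_lact_add_left
      succ_scale_left module.scale_right_distrib vector_space_imp_module)

lemma tot_lact_scale_right: "tot_lact D f (dscale D c y) = dscale D c (tot_lact D f y)"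
  by (induction f rule: single_add_induct)
    (simp_all add: tot_lact_single tot_lact_add_left succ_scale_right
      module.scale_right_distrib vector_space_imp_module vector_space)

lemma tot_ract_scale_left: "tot_ract D (dscale D c y) f = dscale D c (tot_ract D y f)"
  by (induction f rule: single_add_induct)
    (simp_all add: tot_ract_single tot_ract_add_right prec_scale_left
      module.scale_right_distrib vector_space_imp_module vector_space)

lemma tot_ract_scale_right: "tot_ract D y (tot_scale (dscale D) c f) = dscale D c (tot_ract D y f)"
  by (induction f rule: single_add_induct)
    (simp_all add: tot_scale_single tot_scale_add vector_space tot_ract_single tot_ract_add_right
      prec_scale_right module.scale_right_distrib vector_space_imp_module)

lemma total_assoc:
  fixes \<alpha> \<beta> \<gamma> :: 'w and x y z :: 'd
  defines "xy \<equiv> prec \<beta> x y + succ \<alpha> x y" and "yz \<equiv> prec \<gamma> y z + succ \<beta> y z"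
  shows "prec \<gamma> xy z + succ (\<alpha> * \<beta>) xy z = prec (\<beta> * \<gamma>) x yz + succ \<alpha> x yz"
  unfolding xy_def yz_def succ_succ_assoc
  by (simp add: prec_add_left prec_prec_assoc succ_prec_assoc succ_add_right algebra_simps)

lemma tot_mult_assoc: "tot_mult D (tot_mult D f g) h = tot_mult D f (tot_mult D g h)"
proof (induction f rule: single_add_induct)
  case (single \<alpha> x)
  show ?case
  proof (induction g rule: single_add_induct)
    case (single \<beta> y)
    show ?case
      by (induction h rule: single_add_induct)
        (simp_all add: tot_mult_single total_assoc mult.assoc tot_mult_add_right)
  next
    case (add g1 g2)
    then show ?case by (simp add: tot_mult_add_left tot_mult_add_right)
  qed
next
  case (add f1 f2)
  then show ?case by (simp add: tot_mult_add_left)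
qed

lemma tot_lact_tot_mult: "tot_lact D (tot_mult D f g) y = tot_lact D f (tot_lact D g y)"
proof (induction f rule: single_add_induct)
  case (single \<alpha> x)
  show ?case
    by (induction g rule: single_add_induct)
      (simp_all add: tot_mult_single tot_lact_single succ_succ_assoc tot_mult_add_right
        tot_lact_add_left tot_lact_add_right)
next
  case (add f1 f2)
  then show ?case by (simp add: tot_mult_add_left tot_lact_add_left)
qed

lemma tot_ract_tot_mult: "tot_ract D (tot_ract D y f) g = tot_ract D y (tot_mult D f g)"
proof (induction f rule: single_add_induct)
  case (single \<alpha> x)
  show ?case
    by (induction g rule: single_add_induct)
      (simp_all add: tot_mult_single tot_ract_single prec_prec_assoc tot_mult_add_right
        tot_ract_add_right)
next
  case (add f1 f2)
  then show ?case by (simp add: tot_mult_add_left tot_ract_add_left tot_ract_add_right)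
qed

lemma tot_ract_tot_lact: "tot_ract D (tot_lact D f y) g = tot_lact D f (tot_ract D y g)"
proof (induction f rule: single_add_induct)
  case (single \<alpha> x)
  show ?case
    by (induction g rule: single_add_induct)
      (simp_all add: tot_lact_single tot_ract_single succ_prec_assoc tot_lact_add_right
        tot_ract_add_right)
next
  case (add f1 f2)
  then show ?case by (simp add: tot_lact_add_left tot_ract_add_left)
qed

lemma ooperf_G_obj: "ooperf (G_obj D)"
  unfolding ooperf_def bimodule_def assoc_alg_def bilin_def G_obj_def
  by (simp add: Vector_Spaces.linear_iff vector_space_tot_scale vector_space
      tot_mult_add_left tot_mult_add_right tot_mult_scale_left tot_mult_scale_right
      tot_lact_add_left tot_lact_add_right tot_lact_scale_left tot_lact_scale_right
      tot_ract_add_left tot_ract_add_right tot_ract_scale_left tot_ract_scale_right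
      tot_mult_assoc tot_lact_tot_mult tot_ract_tot_mult tot_ract_tot_lact
      tot_scale_single single_add tot_mult_single tot_lact_single tot_ract_single add.commute)

lemma F_obj_G_obj: "F_obj (G_obj D) = D"
  by (simp add: F_obj_def G_obj_def tot_lact_single tot_ract_single)

end

section \<open>The dendriform family algebra of an O-operator family\<close>

locale O_operator_family =
  fixes T :: "('k::field, 'w::semigroup_mult, 'a::ab_group_add, 'm::ab_group_add) oopf"
  assumes ooperf: "ooperf T"
begin

lemma
  shows vector_space_algebra: "vector_space (ascale T)"
    and vector_space_module: "vector_space (mscale T)"
  using ooperf by (simp_all add: ooperf_def bimodule_def assoc_alg_def)

lemma
  shows linear_amult_left: "Vector_Spaces.linear (ascale T) (ascale T) (\<lambda>a. amult T a b)"
    and linear_amult_right: "Vector_Spaces.linear (ascale T) (ascale T) (amult T a)"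
    and linear_lact_left: "Vector_Spaces.linear (ascale T) (mscale T) (\<lambda>a. lact T a u)"
    and linear_lact_right: "Vector_Spaces.linear (mscale T) (mscale T) (lact T a)"
    and linear_ract_left: "Vector_Spaces.linear (mscale T) (mscale T) (\<lambda>u. ract T u a)"
    and linear_ract_right: "Vector_Spaces.linear (ascale T) (mscale T) (ract T u)"
    and linear_oper: "Vector_Spaces.linear (mscale T) (ascale T) (oper T \<alpha>)"
  using ooperf by (simp_all add: ooperf_def bimodule_def assoc_alg_def bilin_def)

lemmas amult_add_left = linear_hom_add[OF linear_amult_left]
  and amult_add_right = linear_hom_add[OF linear_amult_right]
  and lact_add_left = linear_hom_add[OF linear_lact_left]
  and lact_add_right = linear_hom_add[OF linear_lact_right]
  and ract_add_left = linear_hom_add[OF linear_ract_left]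
  and ract_add_right = linear_hom_add[OF linear_ract_right]
  and oper_add = linear_hom_add[OF linear_oper]
  and lact_scale_left = linear_hom_scale[OF linear_lact_left]
  and lact_scale_right = linear_hom_scale[OF linear_lact_right]
  and ract_scale_left = linear_hom_scale[OF linear_ract_left]
  and ract_scale_right = linear_hom_scale[OF linear_ract_right]
  and oper_scale = linear_hom_scale[OF linear_oper]
  and oper_zero = linear_hom_zero[OF linear_oper]

lemma
  shows lact_amult: "lact T (amult T a b) u = lact T a (lact T b u)"
    and ract_ract: "ract T (ract T u a) b = ract T u (amult T a b)"
    and ract_lact: "ract T (lact T a u) b = lact T a (ract T u b)"
    and amult_oper: "amult T (oper T \<alpha> u) (oper T \<beta> v)
      = oper T (\<alpha> * \<beta>) (lact T (oper T \<alpha> u) v + ract T u (oper T \<beta> v))"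
  using ooperf by (simp_all add: ooperf_def bimodule_def)

lemma dendf_F_obj: "dendf (F_obj T)"
  unfolding dendf_def F_obj_def bilin_def
  by (simp add: Vector_Spaces.linear_iff vector_space_module vector_space_algebra
      lact_add_left lact_add_right ract_add_left ract_add_right oper_add
      lact_scale_left lact_scale_right ract_scale_left ract_scale_right oper_scale
      ract_ract ract_lact lact_amult[symmetric] amult_oper add.commute)

end

lemma F_mor_hom: "h \<in> oopf_hom T T' \<Longrightarrow> F_mor h \<in> dend_hom (F_obj T) (F_obj T')"
  unfolding oopf_hom_def dend_hom_def F_mor_def F_obj_def
  by (auto simp: fun_eq_iff)

lemma G_mor_hom:
  fixes D :: "('k::field, 'w::semigroup_mult, 'd::ab_group_add) dend"
    and D' :: "('k, 'w, 'd2::ab_group_add) dend"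
  assumes "dendf D'" and "dendf D" and hom: "g \<in> dend_hom D' D"
  shows "G_mor g \<in> oopf_hom (G_obj D') (G_obj D)"
proof -
  interpret D': dendriform_family D' using \<open>dendf D'\<close> by unfold_locales
  interpret D: dendriform_family D using \<open>dendf D\<close> by unfold_locales
  have linear: "Vector_Spaces.linear (dscale D') (dscale D) g"
    and prec: "\<And>\<alpha> x y. g (dprec D' \<alpha> x y) = dprec D \<alpha> (g x) (g y)"
    and succ: "\<And>\<alpha> x y. g (dsucc D' \<alpha> x y) = dsucc D \<alpha> (g x) (g y)"
    using hom by (auto simp: dend_hom_def)
  note additive = linear_hom_add[OF linear] and zero = linear_hom_zero[OF linear]
  have map_add: "Poly_Mapping.map g (f1 + f2) = Poly_Mapping.map g f1 + Poly_Mapping.map g f2"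
    for f1 f2 :: "'w \<Rightarrow>\<^sub>0 'd2"
    by (rule map_add_additive) (rule additive)
  have map_single: "Poly_Mapping.map g (Poly_Mapping.single \<alpha> x) = Poly_Mapping.single \<alpha> (g x)"
    for \<alpha> :: 'w and x
    by (simp add: zero)
  have "Poly_Mapping.map g (tot_scale (dscale D') c f) = tot_scale (dscale D) c (Poly_Mapping.map g f)"
    for c and f :: "'w \<Rightarrow>\<^sub>0 'd2"
    by (induction f rule: single_add_induct)
      (simp_all add: map_single map_add tot_scale_single tot_scale_add D.vector_space D'.vector_space
        linear_hom_scale[OF linear])
  then have "Vector_Spaces.linear (tot_scale (dscale D')) (tot_scale (dscale D))
      (Poly_Mapping.map g :: ('w \<Rightarrow>\<^sub>0 'd2) \<Rightarrow> _)"
    by (simp add: Vector_Spaces.linear_iff vector_space_tot_scale D.vector_space D'.vector_space map_add)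
  moreover have "Poly_Mapping.map g (tot_mult D' a b)
      = tot_mult D (Poly_Mapping.map g a) (Poly_Mapping.map g b)" for a b
  proof (induction a rule: single_add_induct)
    case (single \<alpha> x)
    show ?case
      by (induction b rule: single_add_induct)
        (simp_all add: map_single map_add D.tot_mult_single D'.tot_mult_single prec succ additive
          D.tot_mult_add_right D'.tot_mult_add_right)
  next
    case (add a1 a2)
    then show ?case by (simp add: map_add D.tot_mult_add_left D'.tot_mult_add_left)
  qed
  moreover have "g (tot_lact D' a u) = tot_lact D (Poly_Mapping.map g a) (g u)" for a u
    by (induction a rule: single_add_induct)
      (simp_all add: map_single map_add D.tot_lact_single D'.tot_lact_single
        D.tot_lact_add_left D'.tot_lact_add_left succ additive)
  moreover have "g (tot_ract D' u a) = tot_ract D (g u) (Poly_Mapping.map g a)" for a u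
    by (induction a rule: single_add_induct)
      (simp_all add: map_single map_add D.tot_ract_single D'.tot_ract_single
        D.tot_ract_add_right D'.tot_ract_add_right prec additive)
  ultimately show ?thesis
    unfolding oopf_hom_def G_mor_def G_obj_def
    by (simp add: linear map_single fun_eq_iff)
qed

section \<open>The adjunction\<close>

lemma oopf_hom_G_obj_single:
  "(\<phi>, \<psi>) \<in> oopf_hom (G_obj D) T \<Longrightarrow> \<phi> (Poly_Mapping.single \<alpha> x) = oper T \<alpha> (\<psi> x)"
  unfolding oopf_hom_def G_obj_def by (simp add: fun_eq_iff)

lemma oopf_hom_G_obj_unique:
  assumes "(\<phi>1, \<psi>) \<in> oopf_hom (G_obj D) T" and "(\<phi>2, \<psi>) \<in> oopf_hom (G_obj D) T"
  shows "\<phi>1 = \<phi>2"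
proof
  have "Vector_Spaces.linear (ascale (G_obj D)) (ascale T) \<phi>1"
    and "Vector_Spaces.linear (ascale (G_obj D)) (ascale T) \<phi>2"
    using assms by (simp_all add: oopf_hom_def)
  then show "\<phi>1 f = \<phi>2 f" for f
    by (induction f rule: single_add_induct)
      (simp_all add: linear_hom_add oopf_hom_G_obj_single[OF assms(1)] oopf_hom_G_obj_single[OF assms(2)])
qed

locale dend_hom_to_F_obj = D: dendriform_family D + T: O_operator_family T
  for D :: "('k::field, 'w::semigroup_mult, 'd::ab_group_add) dend"
    and T :: "('k, 'w, 'a::ab_group_add, 'm::ab_group_add) oopf" +
  fixes \<psi> :: "'d \<Rightarrow> 'm"
  assumes dend_hom: "\<psi> \<in> dend_hom D (F_obj T)"
begin

abbreviation lift :: "('w \<Rightarrow>\<^sub>0 'd) \<Rightarrow> 'a" where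
  "lift \<equiv> pm_extend (\<lambda>\<alpha> x. oper T \<alpha> (\<psi> x))"

lemma
  shows hom_linear: "Vector_Spaces.linear (dscale D) (mscale T) \<psi>"
    and hom_prec: "\<psi> (dprec D \<alpha> x y) = ract T (\<psi> x) (oper T \<alpha> (\<psi> y))"
    and hom_succ: "\<psi> (dsucc D \<alpha> x y) = lact T (oper T \<alpha> (\<psi> x)) (\<psi> y)"
  using dend_hom by (auto simp: dend_hom_def F_obj_def)

lemmas hom_add = linear_hom_add[OF hom_linear]

lemma lift_add: "lift (f1 + f2) = lift f1 + lift f2"
  by (rule pm_extend_add) (simp add: hom_add T.oper_add)

lemma lift_single: "lift (Poly_Mapping.single \<alpha> x) = oper T \<alpha> (\<psi> x)"
  by (rule pm_extend_single) (simp add: linear_hom_zero[OF hom_linear] T.oper_zero)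

lemma linear_lift: "Vector_Spaces.linear (tot_scale (dscale D)) (ascale T) lift"
proof -
  have "lift (tot_scale (dscale D) c f) = ascale T c (lift f)" for c f
    by (induction f rule: single_add_induct)
      (simp_all add: lift_single lift_add tot_scale_single tot_scale_add D.vector_space
        linear_hom_scale[OF hom_linear] T.oper_scale module.scale_right_distrib
        vector_space_imp_module T.vector_space_algebra)
  then show ?thesis
    by (simp add: Vector_Spaces.linear_iff vector_space_tot_scale D.vector_space
        T.vector_space_algebra lift_add)
qed

lemma lift_tot_mult: "lift (tot_mult D f g) = amult T (lift f) (lift g)"
proof (induction f rule: single_add_induct)
  case (single \<alpha> x)
  show ?case
    by (induction g rule: single_add_induct)
      (simp_all add: D.tot_mult_single lift_single lift_add hom_add hom_prec hom_succ
        T.amult_oper add.commute D.tot_mult_add_right T.amult_add_right)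
next
  case (add f1 f2)
  then show ?case by (simp add: lift_add D.tot_mult_add_left T.amult_add_left)
qed

lemma hom_tot_lact: "\<psi> (tot_lact D f u) = lact T (lift f) (\<psi> u)"
  by (induction f rule: single_add_induct)
    (simp_all add: lift_single lift_add D.tot_lact_single D.tot_lact_add_left hom_succ hom_add
      T.lact_add_left)

lemma hom_tot_ract: "\<psi> (tot_ract D u f) = ract T (\<psi> u) (lift f)"
  by (induction f rule: single_add_induct)
    (simp_all add: lift_single lift_add D.tot_ract_single D.tot_ract_add_right hom_prec hom_add
      T.ract_add_right)

lemma lift_oopf_hom: "(lift, \<psi>) \<in> oopf_hom (G_obj D) T"
  unfolding oopf_hom_def G_obj_def
  by (simp add: hom_linear linear_lift lift_tot_mult hom_tot_lact hom_tot_ract lift_single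
      fun_eq_iff)

end

lemma F_mor_oopf_comp: "F_mor (oopf_comp h p) = F_mor h \<circ> F_mor p"
  by (simp add: F_mor_def oopf_comp_def)

lemma F_mor_G_mor: "F_mor (G_mor g) = g"
  by (simp add: F_mor_def G_mor_def)

lemma bij_betw_F_mor:
  assumes "dendf D" and "ooperf T"
  shows "bij_betw F_mor (oopf_hom (G_obj D) T) (dend_hom D (F_obj T))"
proof (rule bij_betw_imageI)
  interpret D: dendriform_family D using \<open>dendf D\<close> by unfold_locales
  show "inj_on F_mor (oopf_hom (G_obj D) T)"
    by (intro inj_onI) (auto simp: F_mor_def intro: oopf_hom_G_obj_unique)
  have "F_mor ` oopf_hom (G_obj D) T \<subseteq> dend_hom D (F_obj T)"
    using F_mor_hom[of _ "G_obj D" T] unfolding D.F_obj_G_obj by blast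
  moreover have "\<psi> \<in> F_mor ` oopf_hom (G_obj D) T" if "\<psi> \<in> dend_hom D (F_obj T)" for \<psi>
  proof -
    interpret dend_hom_to_F_obj D T \<psi>
      using assms that by unfold_locales
    show ?thesis using lift_oopf_hom by (force simp: F_mor_def)
  qed
  ultimately show "F_mor ` oopf_hom (G_obj D) T = dend_hom D (F_obj T)" by blast
qed

theorem proposition2p17:
  fixes D :: "('k::field, 'w::semigroup_mult, 'd::ab_group_add) dend"
    and T :: "('k, 'w, 'a::ab_group_add, 'm::ab_group_add) oopf"
    and D' :: "('k, 'w, 'd2::ab_group_add) dend"
    and T' :: "('k, 'w, 'a2::ab_group_add, 'm2::ab_group_add) oopf"
  assumes "dendf D" and "ooperf T" and "dendf D'" and "ooperf T'"
  shows "ooperf (G_obj D) \<and> dendf (F_obj T)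
    \<and> (\<forall>g \<in> dend_hom D' D. G_mor g \<in> oopf_hom (G_obj D') (G_obj D))
    \<and> (\<forall>h \<in> oopf_hom T T'. F_mor h \<in> dend_hom (F_obj T) (F_obj T'))
    \<and> bij_betw F_mor (oopf_hom (G_obj D) T) (dend_hom D (F_obj T))
    \<and> (\<forall>g \<in> dend_hom D' D. \<forall>h \<in> oopf_hom T T'. \<forall>p \<in> oopf_hom (G_obj D) T.
          F_mor (oopf_comp h (oopf_comp p (G_mor g))) = F_mor h \<circ> F_mor p \<circ> g)"
proof -
  interpret D: dendriform_family D using \<open>dendf D\<close> by unfold_locales
  interpret T: O_operator_family T using \<open>ooperf T\<close> by unfold_locales
  show ?thesis
    using D.ooperf_G_obj T.dendf_F_obj G_mor_hom[OF \<open>dendf D'\<close> \<open>dendf D\<close>] F_mor_hom[of _ T T']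
      bij_betw_F_mor[OF assms(1,2)]
    by (simp add: F_mor_oopf_comp F_mor_G_mor comp_assoc)
qed

end
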